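(* Let $m>0$, $w>v>0$ and $s,u\geq 0$. Let $\mathfrak{n}$ be the five-dimensional real Lie algebra with basis $\{E_1,\dots,E_5\}$ whose only non-vanishing brackets (up to antisymmetry) are $$[E_1,E_2]=mE_3+sE_4+uE_5,\qquad [E_1,E_3]=vE_4,\qquad [E_2,E_3]=wE_5.$$ Equip the corresponding simply connected nilpotent Lie group with the left-invariant Riemannian metric for which $\{E_1,\dots,E_5\}$ is orthonormal. Then this metric is not an algebraic Ricci soliton.
   Context: Let $G$ be a Lie group with Lie algebra $\mathfrak{g}$ and let $g$ be a left-invariant Riemannian metric on $G$. Let $\mathrm{Ric}$ denote the $(1,1)$ Ricci tensor of $g$, viewed as a linear endomorphism of $\mathfrak{g}$. The metric $g$ is an algebraic Ricci soliton if there are a real number $c$ and a derivation $D$ of $\mathfrak{g}$ such that $\mathrm{Ric}=c\,\mathrm{Id}+D$. *)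

theory Defs
  imports "HOL-Analysis.Analysis"
begin

text \<open>Metric Lie algebras: the Lie algebra of a Lie group is modelled on real^'n,
  with a bracket br; the left-invariant metric is the standard inner product
  (so the standard basis is orthonormal).\<close>

text \<open>Levi-Civita connection on left-invariant fields (Koszul formula):
  2 g(nabla_X Y, Z) = g([X,Y],Z) - g([Y,Z],X) + g([Z,X],Y).\<close>
definition lc_conn :: "(real^'n \<Rightarrow> real^'n \<Rightarrow> real^'n) \<Rightarrow> real^'n \<Rightarrow> real^'n \<Rightarrow> real^'n"
  where "lc_conn br X Y = (\<chi> k. (1/2) * (br X Y \<bullet> axis k 1 - br Y (axis k 1) \<bullet> X
                                     + br (axis k 1) X \<bullet> Y))"

definition curv :: "(real^'n \<Rightarrow> real^'n \<Rightarrow> real^'n) \<Rightarrow> real^'n \<Rightarrow> real^'n \<Rightarrow> real^'n \<Rightarrow> real^'n"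
  where "curv br X Y Z = lc_conn br X (lc_conn br Y Z) - lc_conn br Y (lc_conn br X Z)
                         - lc_conn br (br X Y) Z"

definition ricci_form :: "(real^'n \<Rightarrow> real^'n \<Rightarrow> real^'n) \<Rightarrow> real^'n \<Rightarrow> real^'n \<Rightarrow> real"
  where "ricci_form br X Y = (\<Sum>i\<in>UNIV. curv br (axis i 1) X Y \<bullet> axis i 1)"

definition ricci_op :: "(real^'n \<Rightarrow> real^'n \<Rightarrow> real^'n) \<Rightarrow> real^'n \<Rightarrow> real^'n"
  where "ricci_op br X = (\<chi> k. ricci_form br X (axis k 1))"

definition is_derivation :: "(real^'n \<Rightarrow> real^'n \<Rightarrow> real^'n) \<Rightarrow> (real^'n \<Rightarrow> real^'n) \<Rightarrow> bool"
  where "is_derivation br D \<longleftrightarrow> linear D \<and>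
           (\<forall>X Y. D (br X Y) = br (D X) Y + br X (D Y))"

definition algebraic_ricci_soliton :: "(real^'n \<Rightarrow> real^'n \<Rightarrow> real^'n) \<Rightarrow> bool"
  where "algebraic_ricci_soliton br \<longleftrightarrow>
           (\<exists>c D. is_derivation br D \<and> (\<forall>X. ricci_op br X = c *\<^sub>R X + D X))"

text \<open>The concrete five-dimensional algebra. Basis vector E_i (i = 1..5) is the
  standard basis vector with index of_nat (i - 1) of the numeral type 5.\<close>
definition bas :: "nat \<Rightarrow> real^5"
  where "bas i = axis (of_nat (i - 1)) 1"

definition n5_tab :: "real \<Rightarrow> real \<Rightarrow> real \<Rightarrow> real \<Rightarrow> real \<Rightarrow> nat \<Rightarrow> nat \<Rightarrow> real^5"
  where "n5_tab m s u v w i j =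
     (if (i, j) = (1, 2) then m *\<^sub>R bas 3 + s *\<^sub>R bas 4 + u *\<^sub>R bas 5
      else if (i, j) = (2, 1) then - (m *\<^sub>R bas 3 + s *\<^sub>R bas 4 + u *\<^sub>R bas 5)
      else if (i, j) = (1, 3) then v *\<^sub>R bas 4
      else if (i, j) = (3, 1) then - (v *\<^sub>R bas 4)
      else if (i, j) = (2, 3) then w *\<^sub>R bas 5
      else if (i, j) = (3, 2) then - (w *\<^sub>R bas 5)
      else 0)"

definition n5_br :: "real \<Rightarrow> real \<Rightarrow> real \<Rightarrow> real \<Rightarrow> real \<Rightarrow> real^5 \<Rightarrow> real^5 \<Rightarrow> real^5"
  where "n5_br m s u v w X Y =
     (\<Sum>i\<in>{1..5}. \<Sum>j\<in>{1..5}. ((X \<bullet> bas i) * (Y \<bullet> bas j)) *\<^sub>R n5_tab m s u v w i j)"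

end

theory Submission
  imports Defs
begin

text \<open>If \<open>Ric = c Id + D\<close> with \<open>D\<close> a derivation, the Leibniz rule for \<open>D = Ric - c Id\<close>,
  evaluated on the three nonzero brackets and read off in the coordinate of the result, gives
  three polynomial identities. The one from \<open>[E\<^sub>1,E\<^sub>2]\<close> forces \<open>s = 0\<close>; the ones from
  \<open>[E\<^sub>1,E\<^sub>3]\<close> and \<open>[E\<^sub>2,E\<^sub>3]\<close> then determine \<open>c\<close> in two ways, and comparing them yields
  \<open>v\<^sup>2 = u\<^sup>2 + w\<^sup>2\<close>, which contradicts \<open>w > v > 0\<close>.\<close>

lemma algebraic_ricci_soliton_iff:
  "algebraic_ricci_soliton br \<longleftrightarrow> (\<exists>c. is_derivation br (\<lambda>X. ricci_op br X - c *\<^sub>R X))"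
proof
  assume "algebraic_ricci_soliton br"
  then obtain c D where "is_derivation br D" and "\<And>X. ricci_op br X = c *\<^sub>R X + D X"
    unfolding algebraic_ricci_soliton_def by blast
  then have "is_derivation br (\<lambda>X. ricci_op br X - c *\<^sub>R X)"
    by simp
  then show "\<exists>c. is_derivation br (\<lambda>X. ricci_op br X - c *\<^sub>R X)" ..
next
  assume "\<exists>c. is_derivation br (\<lambda>X. ricci_op br X - c *\<^sub>R X)"
  then show "algebraic_ricci_soliton br"
    unfolding algebraic_ricci_soliton_def by force
qed

lemma exhaust_5:
  fixes x :: 5
  shows "x = 0 \<or> x = 1 \<or> x = 2 \<or> x = 3 \<or> x = 4"
proof (induct x)
  case (of_int z)
  then have "z = 0 \<or> z = 1 \<or> z = 2 \<or> z = 3 \<or> z = 4" by fastforce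
  then show ?case by auto
qed

lemma UNIV_5: "UNIV = {0, 1, 2, 3, 4::5}"
  using exhaust_5 by auto

lemma sum_5: "sum f (UNIV::5 set) = f 0 + f 1 + f 2 + f 3 + f 4"
  unfolding UNIV_5 by (simp add: ac_simps)

lemma axis_nth: "axis i (1::real) $ j = (if j = i then 1 else 0)"
  by (simp add: axis_def)

lemma lc_conn_nth:
  "lc_conn br X Y $ k = (1/2) * (br X Y $ k - (\<Sum>j\<in>UNIV. br Y (axis k 1) $ j * X $ j)
     + (\<Sum>j\<in>UNIV. br (axis k 1) X $ j * Y $ j))"
  by (simp add: lc_conn_def inner_vec_def axis_nth if_distrib cong: if_cong)

lemma ricci_op_nth: "ricci_op br X $ k = (\<Sum>i\<in>UNIV. curv br (axis i 1) X (axis k 1) $ i)"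
  by (simp add: ricci_op_def ricci_form_def inner_axis)

lemma n5_br_nth:
  "n5_br m s u v w X Y $ k =
    (if k = 2 then m * (X$0 * Y$1 - X$1 * Y$0)
     else if k = 3 then s * (X$0 * Y$1 - X$1 * Y$0) + v * (X$0 * Y$2 - X$2 * Y$0)
     else if k = 4 then u * (X$0 * Y$1 - X$1 * Y$0) + w * (X$1 * Y$2 - X$2 * Y$1)
     else 0)"
  using exhaust_5[of k]
  by (auto simp: n5_br_def n5_tab_def bas_def numeral_eq_Suc inner_axis axis_nth algebra_simps)

lemma n5_ricci_nth:
  "ricci_op (n5_br m s u v w) X $ k =
    (if k = 0 then - (m\<^sup>2 + s\<^sup>2 + u\<^sup>2 + v\<^sup>2) / 2 * X$0 + u * w / 2 * X$2
     else if k = 1 then - (m\<^sup>2 + s\<^sup>2 + u\<^sup>2 + w\<^sup>2) / 2 * X$1 - s * v / 2 * X$2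
     else if k = 2 then u * w / 2 * X$0 - s * v / 2 * X$1 + (m\<^sup>2 - v\<^sup>2 - w\<^sup>2) / 2 * X$2
                        + m * s / 2 * X$3 + m * u / 2 * X$4
     else if k = 3 then m * s / 2 * X$2 + (s\<^sup>2 + v\<^sup>2) / 2 * X$3 + s * u / 2 * X$4
     else m * u / 2 * X$2 + s * u / 2 * X$3 + (u\<^sup>2 + w\<^sup>2) / 2 * X$4)"
  using exhaust_5[of k]
  by (elim disjE) (simp_all add: ricci_op_nth curv_def lc_conn_nth n5_br_nth sum_5 axis_nth
      field_simps power2_eq_square)

lemma n5_shifted_ricci_derivation_equations:
  assumes "is_derivation (n5_br m s u v w) (\<lambda>X. ricci_op (n5_br m s u v w) X - c *\<^sub>R X)"
  shows "m * s * v = 0"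
    and "v * (2 * c + 3 * s\<^sup>2 + u\<^sup>2 + 3 * v\<^sup>2 + w\<^sup>2) = 0"
    and "w * (2 * c + s\<^sup>2 + 3 * u\<^sup>2 + v\<^sup>2 + 3 * w\<^sup>2) = 0"
proof -
  let ?br = "n5_br m s u v w" and ?Ric = "ricci_op (n5_br m s u v w)"
  have leibniz: "(?Ric (?br X Y) - c *\<^sub>R ?br X Y) $ k
      = (?br (?Ric X - c *\<^sub>R X) Y + ?br X (?Ric Y - c *\<^sub>R Y)) $ k" for X Y k
    using assms by (simp add: is_derivation_def)
  show "m * s * v = 0"
    using leibniz[of "axis 0 1" "axis 1 1" 1] by (auto simp: n5_br_nth n5_ricci_nth axis_nth)
  show "v * (2 * c + 3 * s\<^sup>2 + u\<^sup>2 + 3 * v\<^sup>2 + w\<^sup>2) = 0"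
    using leibniz[of "axis 0 1" "axis 2 1" 3]
    by (simp add: n5_br_nth n5_ricci_nth axis_nth) (simp add: field_simps power2_eq_square, algebra)
  show "w * (2 * c + s\<^sup>2 + 3 * u\<^sup>2 + v\<^sup>2 + 3 * w\<^sup>2) = 0"
    using leibniz[of "axis 1 1" "axis 2 1" 4]
    by (simp add: n5_br_nth n5_ricci_nth axis_nth) (simp add: field_simps power2_eq_square, algebra)
qed

theorem mainTheorem9:
  fixes m s u v w :: real
  assumes "m > 0" and "w > v" and "v > 0" and "s \<ge> 0" and "u \<ge> 0"
  shows "\<not> algebraic_ricci_soliton (n5_br m s u v w)"
proof
  assume "algebraic_ricci_soliton (n5_br m s u v w)"
  then obtain c
    where der: "is_derivation (n5_br m s u v w) (\<lambda>X. ricci_op (n5_br m s u v w) X - c *\<^sub>R X)"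
    by (auto simp: algebraic_ricci_soliton_iff)
  note equations = n5_shifted_ricci_derivation_equations[OF der]
  have "s = 0"
    using equations(1) assms by simp
  have "2 * c + u\<^sup>2 + 3 * v\<^sup>2 + w\<^sup>2 = 0"
    using equations(2) \<open>s = 0\<close> \<open>v > 0\<close> by simp
  moreover have "2 * c + 3 * u\<^sup>2 + v\<^sup>2 + 3 * w\<^sup>2 = 0"
    using equations(3) \<open>s = 0\<close> \<open>w > v\<close> \<open>v > 0\<close> by simp
  ultimately have "v\<^sup>2 = u\<^sup>2 + w\<^sup>2"
    by linarith
  moreover have "v\<^sup>2 < w\<^sup>2"
    using assms by (simp add: power_strict_mono)
  ultimately show False
    by (smt (verit) zero_le_power2)
qed

end
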